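(* Let $\mathsf{X}=\mathsf{X}^{(1)}+\mathsf{X}^{(2)}$ be a real time series of length $N$, let $L$ be a window length with $1<L<N$ and $K=N-L+1$. Suppose the $L$-rank of $\mathsf{X}$ equals $r$, the $L$-rank of $\mathsf{X}^{(m)}$ equals $r_m$ for $m=1,2$, and $r_1+r_2=r$. Then there exist symmetric positive semidefinite matrices $\mathbf{L}\in\mathbb{R}^{L\times L}$ and $\mathbf{R}\in\mathbb{R}^{K\times K}$, both of rank $r$ and consistent with each of $\mathbf{X}$, $\mathbf{X}^{(1)}$, $\mathbf{X}^{(2)}$, such that $\mathsf{X}^{(1)}$ and $\mathsf{X}^{(2)}$ are strongly $(\mathbf{L},\mathbf{R})$-separable.
   Context: For a series $\mathsf{Y}=(y_1,\dots,y_N)$ and window length $L$ ($1<L<N$, $K=N-L+1$), the $L$-trajectory matrix $\mathbf{Y}=\mathcal{T}(\mathsf{Y})\in\mathbb{R}^{L\times K}$ has $(i,j)$ entry $y_{i+j-1}$; its rank is the $L$-rank of $\mathsf{Y}$. Bold $\mathbf{X},\mathbf{X}^{(1)},\mathbf{X}^{(2)}$ denote the $L$-trajectory matrices of $\mathsf{X},\mathsf{X}^{(1)},\mathsf{X}^{(2)}$. A pair of symmetric positive semidefinite matrices $(\mathbf{L},\mathbf{R})$, $\mathbf{L}\in\mathbb{R}^{L\times L}$, $\mathbf{R}\in\mathbb{R}^{K\times K}$, is consistent with a matrix $\mathbf{Y}\in\mathbb{R}^{L\times K}$ if the column space of $\mathbf{L}$ contains the column space of $\mathbf{Y}$ and the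 column space of $\mathbf{R}$ contains the row space of $\mathbf{Y}$. For $\mathbf{Y}$ of rank $r$ and $(\mathbf{L},\mathbf{R})$ consistent with $\mathbf{Y}$, an $(\mathbf{L},\mathbf{R})$-SVD of $\mathbf{Y}$ is a decomposition $\mathbf{Y}=\sum_{i=1}^r\sigma_iP_iQ_i^{\mathrm{T}}$ with $\sigma_1\ge\dots\ge\sigma_r>0$, $P_i\in\mathbb{R}^L$, $Q_i\in\mathbb{R}^K$, $P_i^{\mathrm T}\mathbf{L}P_j=\delta_{ij}$ and $Q_i^{\mathrm T}\mathbf{R}Q_j=\delta_{ij}$. Two series $\mathsf{X}^{(1)},\mathsf{X}^{(2)}$ of length $N$ are weakly $(\mathbf{L},\mathbf{R})$-separable if $(\mathbf{X}^{(1)})^{\mathrm T}\mathbf{L}\mathbf{X}^{(2)}=\mathbf{0}_{K,K}$ and $\mathbf{X}^{(1)}\mathbf{R}(\mathbf{X}^{(2)})^{\mathrm T}=\mathbf{0}_{L,L}$; they are strongly $(\mathbf{L},\mathbf{R})$-separable if they are weakly $(\mathbf{L},\mathbf{R})$-separable and, writing $\mathbf{X}^{(m)}=\sum_{i=1}^{r_m}\sigma_{m,i}P_{m,i}Q_{m,i}^{\mathrm T}$ for $(\mathbf{L},\mathbf{R})$-SVDs, $\sigma_{1,i}\ne\sigma_{2,j}$ for all $i,j$. *)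

theory Defs
  imports "Jordan_Normal_Form.DL_Rank"
begin

(* A series of length N is a real list of length N (0-based indices).
   L-trajectory matrix: L x K with K = N - L + 1, entry (i,j) = y_(i+j) (0-based). *)
definition traj :: "nat \<Rightarrow> real list \<Rightarrow> real mat" where
  "traj L ys = mat L (length ys - L + 1) (\<lambda>(i,j). ys ! (i + j))"

definition L_rank :: "nat \<Rightarrow> real list \<Rightarrow> nat" where
  "L_rank L ys = vec_space.rank L (traj L ys)"

definition col_space :: "real mat \<Rightarrow> real vec set" where
  "col_space A = {A *\<^sub>v v | v. v \<in> carrier_vec (dim_col A)}"

definition row_space :: "real mat \<Rightarrow> real vec set" where
  "row_space A = col_space (transpose_mat A)"

definition sym_psd :: "nat \<Rightarrow> real mat \<Rightarrow> bool" where
  "sym_psd n A \<longleftrightarrow> A \<in> carrier_mat n n \<and> transpose_mat A = A \<and>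
     (\<forall>v \<in> carrier_vec n. 0 \<le> v \<bullet> (A *\<^sub>v v))"

definition consistent :: "real mat \<Rightarrow> real mat \<Rightarrow> real mat \<Rightarrow> bool" where
  "consistent Lm Rm Y \<longleftrightarrow> col_space Y \<subseteq> col_space Lm \<and> row_space Y \<subseteq> col_space Rm"

definition LR_svd :: "real mat \<Rightarrow> real mat \<Rightarrow> real mat \<Rightarrow> (nat \<Rightarrow> real) \<Rightarrow> (nat \<Rightarrow> real vec)
    \<Rightarrow> (nat \<Rightarrow> real vec) \<Rightarrow> bool" where
  "LR_svd Lm Rm Y \<sigma> P Q \<longleftrightarrow>
    (let r = vec_space.rank (dim_row Y) Y in
     (\<forall>i j. i \<le> j \<and> j < r \<longrightarrow> \<sigma> j \<le> \<sigma> i) \<and>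
     (\<forall>i < r. 0 < \<sigma> i) \<and>
     (\<forall>i < r. P i \<in> carrier_vec (dim_row Y) \<and> Q i \<in> carrier_vec (dim_col Y)) \<and>
     (\<forall>i < r. \<forall>j < r. P i \<bullet> (Lm *\<^sub>v P j) = (if i = j then 1 else 0)) \<and>
     (\<forall>i < r. \<forall>j < r. Q i \<bullet> (Rm *\<^sub>v Q j) = (if i = j then 1 else 0)) \<and>
     (\<forall>a < dim_row Y. \<forall>b < dim_col Y. Y $$ (a, b) = (\<Sum>i<r. \<sigma> i * (P i $ a) * (Q i $ b))))"

definition weakly_sep :: "real mat \<Rightarrow> real mat \<Rightarrow> real mat \<Rightarrow> real mat \<Rightarrow> bool" where
  "weakly_sep Lm Rm X1 X2 \<longleftrightarrow>
     transpose_mat X1 * Lm * X2 = 0\<^sub>m (dim_col X1) (dim_col X1) \<and>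
     X1 * Rm * transpose_mat X2 = 0\<^sub>m (dim_row X1) (dim_row X1)"

definition strongly_sep :: "real mat \<Rightarrow> real mat \<Rightarrow> real mat \<Rightarrow> real mat \<Rightarrow> bool" where
  "strongly_sep Lm Rm X1 X2 \<longleftrightarrow> weakly_sep Lm Rm X1 X2 \<and>
     (\<exists>\<sigma> P Q. LR_svd Lm Rm X1 \<sigma> P Q) \<and> (\<exists>\<sigma> P Q. LR_svd Lm Rm X2 \<sigma> P Q) \<and>
     (\<forall>\<sigma>1 P1 Q1 \<sigma>2 P2 Q2. LR_svd Lm Rm X1 \<sigma>1 P1 Q1 \<and> LR_svd Lm Rm X2 \<sigma>2 P2 Q2 \<longrightarrow>
        (\<forall>i < vec_space.rank (dim_row X1) X1. \<forall>j < vec_space.rank (dim_row X2) X2. \<sigma>1 i \<noteq> \<sigma>2 j))"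

end

theory Submission
  imports Defs
begin

(* Factor X1 = U1 C1 and X2 = U2 C2 through their ranks and glue
   the factors: U = [U1 U2] (n x r) and C = [C1; C2] (r x k), so that X = U C and
   Xm = U Pm C for the coordinate projections Pm onto the two blocks.  Since X has
   rank r, U is injective and C^T is injective, so both Gram matrices U^T U and C C^T
   are invertible, with symmetric inverses G and H.  With S = diag(1,..,1,2,..,2) put
     Lm = U G G U^T  and  Rm = C^T H S S H C.
   Then U^T Lm U = I and C Rm C^T = S^2: the columns of U and the rows of C are
   Lm- resp. Rm-orthonormal up to the weights S, which yields weak separability,
   explicit (Lm,Rm)-SVDs of X1 (singular value 1) and X2 (singular value 2), and
   Xm Rm Xm^T Lm Xm = s^2 Xm.  The last identity forces EVERY (Lm,Rm)-singular
   value of Xm to equal s, which is strong separability. *)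

(* Rank facts. *)

context vec_space begin

lemma rank_le_of_span_subset:
  assumes A: "A \<in> carrier_mat n na" and B: "B \<in> carrier_mat n nb"
    and sub: "span (set (cols A)) \<subseteq> span (set (cols B))"
  shows "rank A \<le> rank B"
proof -
  have sB: "subspace class_ring (span (set (cols B))) V"
    using B cols_dim carrier_matD(1) span_is_subspace by (metis module_vec_simps(3))
  have sA: "subspace class_ring (span (set (cols A))) V"
    using A cols_dim carrier_matD(1) span_is_subspace by (metis module_vec_simps(3))
  have "subspace class_ring (span (set (cols A))) (vs (span (set (cols B))))"
    using nested_subspaces[OF sB sA sub] .
  then show ?thesis unfolding rank_def
    using vectorspace.subspace_dim[OF subspace_is_vs[OF sB] _ fin_dim_span_cols[OF B]]
      fin_dim_span_cols[OF A] by auto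
qed

lemma rank_mult_le_left:
  assumes M: "M \<in> carrier_mat n m" and N: "N \<in> carrier_mat m k"
  shows "rank (M * N) \<le> rank M"
proof (rule rank_le_of_span_subset[OF _ M])
  show "M * N \<in> carrier_mat n k" using M N by auto
  show "span (set (cols (M * N))) \<subseteq> span (set (cols M))"
  proof
    fix x assume "x \<in> span (set (cols (M * N)))"
    then obtain y where y: "y \<in> carrier_vec k" "x = (M * N) *\<^sub>v y"
      using col_space_eq[of "M * N" k] M N unfolding col_space_def[symmetric] by auto
    then have "x = M *\<^sub>v (N *\<^sub>v y)" and "N *\<^sub>v y \<in> carrier_vec m" using M N by auto
    then show "x \<in> span (set (cols M))"
      using col_space_eq[OF M] M unfolding col_space_def[symmetric] by auto
  qed
qed

lemma exists_maximal_cols: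
  assumes A: "A \<in> carrier_mat n m"
  obtains S where "maximal S (\<lambda>T. T \<subseteq> set (cols A) \<and> lin_indpt T)" "rank A = card S"
proof -
  obtain S where "maximal S (\<lambda>T. T \<subseteq> set (cols A) \<and> lin_indpt T)"
    using maximal_exists[of "\<lambda>T. T \<subseteq> set (cols A) \<and> lin_indpt T" "card (set (cols A))" "{}"]
    by (meson List.finite_set card_mono empty_iff empty_subsetI finite_lin_indpt2 rev_finite_subset)
  with rank_card_indpt[OF A] that show ?thesis by blast
qed

lemma maximal_cols_span:
  assumes A: "A \<in> carrier_mat n m" and j: "j < m"
    and max: "maximal S (\<lambda>T. T \<subseteq> set (cols A) \<and> lin_indpt T)"
  shows "col A j \<in> span S"
proof -
  have SA: "S \<subseteq> set (cols A)" and li: "lin_indpt S" using max unfolding maximal_def by auto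
  have Sc: "S \<subseteq> carrier_vec n" using SA A cols_dim by fastforce
  show ?thesis
  proof (cases "col A j \<in> S")
    case True then show ?thesis using Sc in_own_span by blast
  next
    case False
    have cA: "col A j \<in> set (cols A)" using j A by (metis cols_length cols_nth carrier_matD(2) nth_mem)
    have "\<not> lin_indpt (S \<union> {col A j})"
    proof
      assume "lin_indpt (S \<union> {col A j})"
      then have "S \<union> {col A j} = S" using max cA SA unfolding maximal_def by blast
      then show False using False by auto
    qed
    then show ?thesis using lin_dep_iff_in_span[OF _ li _ False] Sc j A by auto
  qed
qed

lemma rank_factor:
  assumes A: "A \<in> carrier_mat n m"
  obtains U C where "U \<in> carrier_mat n (rank A)" "C \<in> carrier_mat (rank A) m" "A = U * C"
proof -
  obtain S where max: "maximal S (\<lambda>T. T \<subseteq> set (cols A) \<and> lin_indpt T)" and rk: "rank A = card S"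
    using exists_maximal_cols[OF A] by blast
  have SA: "S \<subseteq> set (cols A)" using max unfolding maximal_def by auto
  have Sc: "S \<subseteq> carrier_vec n" using SA A cols_dim by fastforce
  obtain xs where xs: "set xs = S" "distinct xs"
    using finite_distinct_list[OF finite_subset[OF SA List.finite_set]] by blast
  define U where "U = mat_of_cols n xs"
  have "length xs = rank A" using xs rk distinct_card by metis
  then have U: "U \<in> carrier_mat n (rank A)" unfolding U_def by auto
  have colsU: "cols U = xs" unfolding U_def using xs Sc by (intro cols_mat_of_cols) auto
  have "\<exists>w. w \<in> carrier_vec (rank A) \<and> col A j = U *\<^sub>v w" if j: "j < m" for j
  proof -
    have "col A j \<in> span (set (cols U))" using maximal_cols_span[OF A j max] colsU xs by simp
    then show ?thesis using col_space_eq[OF U] U unfolding col_space_def[symmetric] by auto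
  qed
  then obtain w where w: "\<And>j. j < m \<Longrightarrow> w j \<in> carrier_vec (rank A) \<and> col A j = U *\<^sub>v w j"
    by metis
  define C where "C = mat (rank A) m (\<lambda>(i,j). w j $ i)"
  have C: "C \<in> carrier_mat (rank A) m" unfolding C_def by auto
  have "A = U * C"
  proof (rule mat_col_eqI)
    show "dim_row A = dim_row (U * C)" "dim_col A = dim_col (U * C)" using A U C by auto
    fix j assume "j < dim_col (U * C)"
    then have j: "j < m" using C by auto
    have "col C j = w j" using w[OF j] j unfolding C_def by (auto intro!: eq_vecI)
    then show "col A j = col (U * C) j" using w[OF j] col_mult2[OF U C j] by simp
  qed
  then show ?thesis using that U C by blast
qed

(* Via rank factorisation of the right factor, rank (M N) is also bounded by rank N. *)
lemma rank_mult_le_right: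
  assumes M: "M \<in> carrier_mat n m" and N: "N \<in> carrier_mat m k"
  shows "rank (M * N) \<le> vec_space.rank m N"
proof -
  obtain U C where U: "U \<in> carrier_mat m (vec_space.rank m N)"
    and C: "C \<in> carrier_mat (vec_space.rank m N) k" and NUC: "N = U * C"
    using vec_space.rank_factor[OF N] by blast
  have "M * N = (M * U) * C" using M U C NUC by simp
  then have "rank (M * N) \<le> rank (M * U)" using rank_mult_le_left[of "M * U" "vec_space.rank m N" C k] M U C by simp
  also have "\<dots> \<le> vec_space.rank m N" using rank_le_nc[of "M * U"] M U by simp
  finally show ?thesis .
qed

lemma rank_full_injective:
  assumes A: "A \<in> carrier_mat n m" and rk: "rank A = m"
    and v: "v \<in> carrier_vec m" and Av: "A *\<^sub>v v = 0\<^sub>v n"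
  shows "v = 0\<^sub>v m"
proof (rule ccontr)
  assume v0: "v \<noteq> 0\<^sub>v m"
  have "distinct (cols A)"
  proof (rule ccontr)
    assume "\<not> distinct (cols A)"
    then have "card (set (cols A)) < m"
      using A by (metis card_distinct cols_length carrier_matD(2) card_length le_neq_implies_less)
    moreover obtain S where "maximal S (\<lambda>T. T \<subseteq> set (cols A) \<and> lin_indpt T)" "rank A = card S"
      using exists_maximal_cols[OF A] .
    ultimately have "rank A < m"
      by (metis (no_types, lifting) List.finite_set card_mono maximal_def order.strict_trans1)
    then show False using rk by simp
  qed
  then show False
    using lin_depI[OF A v v0 Av] full_rank_lin_indpt[OF A rk] by blast
qed

lemma rank_full_row_surjective:
  assumes C: "C \<in> carrier_mat n k" and rk: "n \<le> rank C" and y: "y \<in> carrier_vec n"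
  obtains w where "w \<in> carrier_vec k" "y = C *\<^sub>v w"
proof -
  obtain S where max: "maximal S (\<lambda>T. T \<subseteq> set (cols C) \<and> lin_indpt T)" and "rank C = card S"
    using exists_maximal_cols[OF C] by blast
  then have SC: "S \<subseteq> set (cols C)" and "lin_indpt S" and "dim \<le> card S"
    using rk dim_is_n unfolding maximal_def by auto
  moreover have "S \<subseteq> carrier V" using SC C cols_dim by fastforce
  moreover have "finite S" using SC List.finite_set finite_subset by blast
  ultimately have "basis S" using dim_li_is_basis[OF fin_dim] by simp
  then have "y \<in> span S" using y unfolding basis_def by auto
  also have "span S \<subseteq> span (set (cols C))" using SC by (rule span_is_monotone)
  finally show ?thesis using col_space_eq[OF C] C that unfolding col_space_def[symmetric] by auto
qed

end

lemma factor_ranks: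
  fixes U C :: "real mat"
  assumes U: "U \<in> carrier_mat n r" and C: "C \<in> carrier_mat r k"
    and rk: "vec_space.rank n (U * C) = r"
  shows "vec_space.rank n U = r" and "r \<le> vec_space.rank r C"
proof -
  show "vec_space.rank n U = r"
    using vec_space.rank_mult_le_left[OF U C] vec_space.rank_le_nc[OF U] rk by simp
  show "r \<le> vec_space.rank r C"
    using vec_space.rank_mult_le_right[OF U C] rk by simp
qed

lemma self_scalar_zero:
  fixes w :: "real vec"
  assumes "w \<in> carrier_vec n" "w \<bullet> w = 0"
  shows "w = 0\<^sub>v n"
proof -
  have "(\<Sum>i\<in>{0..<n}. w $ i * w $ i) = 0" using assms by (simp add: scalar_prod_def)
  then have "\<forall>i\<in>{0..<n}. w $ i * w $ i = 0" by (subst sum_nonneg_eq_0_iff[symmetric]) auto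
  then show ?thesis using assms by (intro eq_vecI) auto
qed

(* Full row rank makes the transpose injective: a vector orthogonal to all columns of
   C lies in their span, hence is orthogonal to itself. *)
lemma transpose_injective_of_full_row_rank:
  fixes C :: "real mat"
  assumes C: "C \<in> carrier_mat r k" and rk: "r \<le> vec_space.rank r C"
    and y: "y \<in> carrier_vec r" and Cy: "transpose_mat C *\<^sub>v y = 0\<^sub>v k"
  shows "y = 0\<^sub>v r"
proof -
  obtain w where w: "w \<in> carrier_vec k" "y = C *\<^sub>v w"
    using vec_space.rank_full_row_surjective[OF C rk y] .
  have "y \<bullet> y = (transpose_mat C *\<^sub>v y) \<bullet> w"
    using transpose_vec_mult_scalar[OF C w(1) y] w comm_scalar_prod[OF y, of "C *\<^sub>v w"] C by simp
  then show ?thesis using self_scalar_zero[OF y] Cy w(1) by simp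
qed

lemma gram_det_nonzero:
  fixes U :: "real mat"
  assumes U: "U \<in> carrier_mat n r"
    and inj: "\<And>y. y \<in> carrier_vec r \<Longrightarrow> U *\<^sub>v y = 0\<^sub>v n \<Longrightarrow> y = 0\<^sub>v r"
  shows "det (transpose_mat U * U) \<noteq> 0"
proof
  assume "det (transpose_mat U * U) = 0"
  moreover have "transpose_mat U * U \<in> carrier_mat r r" using U by auto
  ultimately obtain v where v: "v \<in> carrier_vec r" "v \<noteq> 0\<^sub>v r" "(transpose_mat U * U) *\<^sub>v v = 0\<^sub>v r"
    using det_0_iff_vec_prod_zero_field by blast
  have Uv: "U *\<^sub>v v \<in> carrier_vec n" using U v by auto
  have "transpose_mat U *\<^sub>v (U *\<^sub>v v) = 0\<^sub>v r"
    using v(3) assoc_mult_mat_vec[of "transpose_mat U" r n U r v] U v(1) by simp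
  then have "(U *\<^sub>v v) \<bullet> (U *\<^sub>v v) = 0"
    using transpose_vec_mult_scalar[OF U v(1) Uv] v(1) by simp
  then show False using self_scalar_zero[OF Uv] inj[OF v(1)] v(2) by simp
qed

lemma sym_inverse:
  fixes G :: "real mat"
  assumes G: "G \<in> carrier_mat r r" and sym: "transpose_mat G = G" and d: "det G \<noteq> 0"
  obtains Gi where "Gi \<in> carrier_mat r r" "transpose_mat Gi = Gi" "Gi * G = 1\<^sub>m r" "G * Gi = 1\<^sub>m r"
proof -
  obtain Gi where Gi: "Gi \<in> carrier_mat r r" "Gi * G = 1\<^sub>m r" "G * Gi = 1\<^sub>m r"
    using det_non_zero_imp_unit[OF G d] unfolding Units_def ring_mat_def by auto
  have GiT: "transpose_mat Gi \<in> carrier_mat r r" using Gi(1) by simp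
  have "G * transpose_mat Gi = 1\<^sub>m r"
    using arg_cong[OF Gi(2), of transpose_mat] transpose_mult[OF Gi(1) G] sym by simp
  then have "Gi = (Gi * G) * transpose_mat Gi"
    using assoc_mult_mat[OF Gi(1) G GiT] right_mult_one_mat[OF Gi(1)] by simp
  then have "transpose_mat Gi = Gi" using Gi(2) left_mult_one_mat[OF GiT] by simp
  then show ?thesis using that Gi by blast
qed

lemma gram_inverse:
  fixes U :: "real mat"
  assumes U: "U \<in> carrier_mat n r"
    and inj: "\<And>y. y \<in> carrier_vec r \<Longrightarrow> U *\<^sub>v y = 0\<^sub>v n \<Longrightarrow> y = 0\<^sub>v r"
  obtains G where "G \<in> carrier_mat r r" "transpose_mat G = G"
    "G * (transpose_mat U * U) = 1\<^sub>m r" "(transpose_mat U * U) * G = 1\<^sub>m r"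
proof (rule sym_inverse[OF _ _ gram_det_nonzero[OF U inj]])
  show "transpose_mat U * U \<in> carrier_mat r r" using U by simp
  show "transpose_mat (transpose_mat U * U) = transpose_mat U * U"
    using transpose_mult[of "transpose_mat U" r n U r] U by simp
qed (use inj that in auto)

lemma sym_psd_gram:
  fixes W :: "real mat"
  assumes W: "W \<in> carrier_mat n m"
  shows "sym_psd n (W * transpose_mat W)"
  unfolding sym_psd_def
proof (intro conjI ballI)
  have WT: "transpose_mat W \<in> carrier_mat m n" using W by simp
  show "W * transpose_mat W \<in> carrier_mat n n" using W by simp
  show "transpose_mat (W * transpose_mat W) = W * transpose_mat W"
    using transpose_mult[OF W WT] by simp
  fix v :: "real vec" assume v: "v \<in> carrier_vec n"
  have w: "transpose_mat W *\<^sub>v v \<in> carrier_vec m" using WT v by simp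
  have "v \<bullet> ((W * transpose_mat W) *\<^sub>v v) = (transpose_mat W *\<^sub>v v) \<bullet> (transpose_mat W *\<^sub>v v)"
    using assoc_mult_mat_vec[OF W WT v] transpose_vec_mult_scalar[OF W w v]
      comm_scalar_prod[OF v, of "W *\<^sub>v (transpose_mat W *\<^sub>v v)"] W w by simp
  also have "\<dots> \<ge> 0" unfolding scalar_prod_def by (intro sum_nonneg) simp
  finally show "0 \<le> v \<bullet> ((W * transpose_mat W) *\<^sub>v v)" .
qed

lemma rank_gram_le:
  fixes W :: "real mat"
  assumes W: "W \<in> carrier_mat d m"
  shows "vec_space.rank d (W * transpose_mat W) \<le> m"
  using vec_space.rank_mult_le_left[OF W, of "transpose_mat W" d] vec_space.rank_le_nc[OF W] W
  by simp

lemma rank_ge_of_identity: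
  fixes A M B :: "real mat"
  assumes A: "A \<in> carrier_mat r n" and M: "M \<in> carrier_mat n n" and B: "B \<in> carrier_mat n r"
    and id: "A * M * B = 1\<^sub>m r"
  shows "r \<le> vec_space.rank n M"
proof -
  have "r = vec_space.rank r (1\<^sub>m r :: real mat)"
    using vec_space.det_rank_iff[of "1\<^sub>m r :: real mat" r] by (metis det_one one_carrier_mat zero_neq_one)
  also have "\<dots> \<le> vec_space.rank r (A * M)"
    using vec_space.rank_mult_le_left[of "A * M" r n B r] A M B id by simp
  also have "\<dots> \<le> vec_space.rank n M" by (rule vec_space.rank_mult_le_right[OF A M])
  finally show ?thesis .
qed

(* Singular values of (Lm,Rm)-SVDs. *)

lemma mult_vec_entry:
  assumes "A \<in> carrier_mat n m" "v \<in> carrier_vec m" "i < n"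
  shows "(A *\<^sub>v v) $ i = (\<Sum>l<m. A $$ (i,l) * v $ l)"
  using assms by (auto simp: scalar_prod_def lessThan_atLeast0 intro!: sum.cong)

lemma smult_mat_mult_vec:
  fixes Y :: "'a :: comm_ring_1 mat"
  assumes Y: "Y \<in> carrier_mat n k" and x: "x \<in> carrier_vec k"
  shows "(c \<cdot>\<^sub>m Y) *\<^sub>v x = c \<cdot>\<^sub>v (Y *\<^sub>v x)"
  using assms by (intro eq_vecI) (auto simp: scalar_prod_def sum_distrib_left mult.assoc)

lemma rank_one_sum_mult_vec:
  fixes Y :: "real mat" and \<sigma> :: "nat \<Rightarrow> real" and P Q :: "nat \<Rightarrow> real vec"
  assumes Y: "Y \<in> carrier_mat n k" and w: "w \<in> carrier_vec k"
    and P: "P j \<in> carrier_vec n" and j: "j < r"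
    and ent: "\<And>a b. a < n \<Longrightarrow> b < k \<Longrightarrow> Y $$ (a,b) = (\<Sum>i<r. \<sigma> i * P i $ a * Q i $ b)"
    and Q: "\<And>i. i < r \<Longrightarrow> Q i \<in> carrier_vec k"
    and orth: "\<And>i. i < r \<Longrightarrow> Q i \<bullet> w = (if i = j then 1 else 0)"
  shows "Y *\<^sub>v w = \<sigma> j \<cdot>\<^sub>v P j"
proof (rule eq_vecI)
  fix a assume "a < dim_vec (\<sigma> j \<cdot>\<^sub>v P j)"
  then have a: "a < n" using P by auto
  have "(Y *\<^sub>v w) $ a = (\<Sum>b<k. \<Sum>i<r. \<sigma> i * P i $ a * (Q i $ b * w $ b))"
    using mult_vec_entry[OF Y w a] ent[OF a]
    by (auto simp: sum_distrib_right mult.assoc intro!: sum.cong)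
  also have "\<dots> = (\<Sum>i<r. \<sigma> i * P i $ a * (Q i \<bullet> w))"
    using w Q by (subst sum.swap) (auto simp: sum_distrib_left scalar_prod_def lessThan_atLeast0)
  also have "\<dots> = (\<Sum>i<r. if i = j then \<sigma> i * P i $ a else 0)"
    by (rule sum.cong) (use orth in auto)
  also have "\<dots> = (\<sigma> j \<cdot>\<^sub>v P j) $ a"
    using j a P by simp
  finally show "(Y *\<^sub>v w) $ a = (\<sigma> j \<cdot>\<^sub>v P j) $ a" .
qed (use Y P in auto)

lemma LR_svd_vectors:
  fixes Y Lm Rm :: "real mat"
  assumes Y: "Y \<in> carrier_mat n k" and Lm: "Lm \<in> carrier_mat n n" and Rm: "Rm \<in> carrier_mat k k"
    and svd: "LR_svd Lm Rm Y \<sigma> P Q" and j: "j < vec_space.rank n Y"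
  shows "Y *\<^sub>v (Rm *\<^sub>v Q j) = \<sigma> j \<cdot>\<^sub>v P j"
    and "transpose_mat Y *\<^sub>v (Lm *\<^sub>v P j) = \<sigma> j \<cdot>\<^sub>v Q j"
    and "P j \<in> carrier_vec n" and "Q j \<in> carrier_vec k"
    and "P j \<bullet> (Lm *\<^sub>v P j) = 1" and "0 < \<sigma> j"
proof -
  let ?r = "vec_space.rank n Y"
  note s = svd[unfolded LR_svd_def Let_def carrier_matD[OF Y]]
  have P: "\<And>i. i < ?r \<Longrightarrow> P i \<in> carrier_vec n" and Q: "\<And>i. i < ?r \<Longrightarrow> Q i \<in> carrier_vec k"
    using s by blast+
  have ent: "\<And>a b. a < n \<Longrightarrow> b < k \<Longrightarrow> Y $$ (a,b) = (\<Sum>i<?r. \<sigma> i * P i $ a * Q i $ b)"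
    using s by blast
  show "P j \<in> carrier_vec n" "Q j \<in> carrier_vec k" "0 < \<sigma> j" using P Q s j by blast+
  show "P j \<bullet> (Lm *\<^sub>v P j) = 1" using s j by auto
  show "Y *\<^sub>v (Rm *\<^sub>v Q j) = \<sigma> j \<cdot>\<^sub>v P j"
    by (rule rank_one_sum_mult_vec[OF Y _ P[OF j] j ent Q]) (use s j Rm Q[OF j] in auto)
  have ent': "\<And>b a. b < k \<Longrightarrow> a < n \<Longrightarrow>
      transpose_mat Y $$ (b,a) = (\<Sum>i<?r. \<sigma> i * Q i $ b * P i $ a)"
    using ent Y by (auto simp: mult.commute mult.left_commute)
  show "transpose_mat Y *\<^sub>v (Lm *\<^sub>v P j) = \<sigma> j \<cdot>\<^sub>v Q j"
    by (rule rank_one_sum_mult_vec[OF _ _ Q[OF j] j ent' P]) (use s j Y Lm P[OF j] in auto)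
qed

lemma LR_svd_sigma_sq:
  fixes Y Lm Rm :: "real mat"
  assumes Y: "Y \<in> carrier_mat n k" and Lm: "Lm \<in> carrier_mat n n" and Rm: "Rm \<in> carrier_mat k k"
    and svd: "LR_svd Lm Rm Y \<sigma> P Q" and j: "j < vec_space.rank n Y"
    and c: "Y * Rm * transpose_mat Y * Lm * Y = c \<cdot>\<^sub>m Y"
  shows "\<sigma> j ^ 2 = c"
proof -
  note f = LR_svd_vectors[OF Y Lm Rm svd j]
  have YT: "transpose_mat Y \<in> carrier_mat k n" using Y by simp
  define x where "x = Rm *\<^sub>v Q j"
  have x: "x \<in> carrier_vec k" using Rm f(4) unfolding x_def by auto
  have Yx: "Y *\<^sub>v x = \<sigma> j \<cdot>\<^sub>v P j" using f(1) unfolding x_def .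
  have "(Y * Rm * transpose_mat Y * Lm * Y) *\<^sub>v x = Y *\<^sub>v (Rm *\<^sub>v (transpose_mat Y *\<^sub>v (Lm *\<^sub>v (Y *\<^sub>v x))))"
  proof -
    have A: "Y * Rm \<in> carrier_mat n k" "Y * Rm * transpose_mat Y \<in> carrier_mat n n"
      "Y * Rm * transpose_mat Y * Lm \<in> carrier_mat n n" using Y Rm YT Lm by auto
    have v: "Y *\<^sub>v x \<in> carrier_vec n" "Lm *\<^sub>v (Y *\<^sub>v x) \<in> carrier_vec n"
      "transpose_mat Y *\<^sub>v (Lm *\<^sub>v (Y *\<^sub>v x)) \<in> carrier_vec k" using Y Lm YT x by auto
    show ?thesis
      using assoc_mult_mat_vec[OF A(3) Y x] assoc_mult_mat_vec[OF A(2) Lm v(1)]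
        assoc_mult_mat_vec[OF A(1) YT v(2)] assoc_mult_mat_vec[OF Y Rm v(3)] by simp
  qed
  also have "\<dots> = (\<sigma> j * \<sigma> j) \<cdot>\<^sub>v (Y *\<^sub>v x)"
    using Yx f(2) f(3) f(4) Y Rm YT Lm
    by (simp add: mult_mat_vec x_def smult_smult_assoc)
  also have "\<dots> = (\<sigma> j * \<sigma> j * \<sigma> j) \<cdot>\<^sub>v P j" using Yx by (simp add: smult_smult_assoc)
  finally have lhs: "(Y * Rm * transpose_mat Y * Lm * Y) *\<^sub>v x = (\<sigma> j * \<sigma> j * \<sigma> j) \<cdot>\<^sub>v P j" .
  have rhs: "(c \<cdot>\<^sub>m Y) *\<^sub>v x = (c * \<sigma> j) \<cdot>\<^sub>v P j"
    using smult_mat_mult_vec[OF Y x] Yx by (simp add: smult_smult_assoc)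
  have "P j \<noteq> 0\<^sub>v n" using f(5) Lm by auto
  then obtain a where a: "a < n" "P j $ a \<noteq> 0"
    using f(3) by (metis carrier_vecD eq_vecI index_zero_vec)
  have "(\<sigma> j * \<sigma> j * \<sigma> j) \<cdot>\<^sub>v P j = (c * \<sigma> j) \<cdot>\<^sub>v P j" using lhs rhs c by simp
  then have "(\<sigma> j * \<sigma> j * \<sigma> j) * P j $ a = (c * \<sigma> j) * P j $ a"
    using a f(3) by (metis carrier_vecD index_smult_vec(1))
  then show ?thesis using a f(6) by (simp add: power2_eq_square)
qed

(* Associativity, transposition and scalars in dimension-only form, for simplification. *)
lemma assoc_dim:
  fixes A B C :: "'a :: comm_semiring_0 mat"
  shows "dim_col A = dim_row B \<Longrightarrow> dim_col B = dim_row C \<Longrightarrow> A * B * C = A * (B * C)"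
  by (rule assoc_mult_mat[of A "dim_row A" "dim_col A" B "dim_col B" C "dim_col C"]) auto

lemma transpose_mult_dim:
  fixes A B :: "'a :: comm_semiring_0 mat"
  shows "dim_col A = dim_row B \<Longrightarrow> transpose_mat (A * B) = transpose_mat B * transpose_mat A"
  by (rule transpose_mult[of A "dim_row A" "dim_col A" B "dim_col B"]) auto

lemma smult_mult_dim:
  fixes A B :: "'a :: comm_ring_1 mat"
  shows "dim_col A = dim_row B \<Longrightarrow> A * (c \<cdot>\<^sub>m B) = c \<cdot>\<^sub>m (A * B)"
  by (rule mult_smult_distrib[of A "dim_row A" "dim_col A" B "dim_col B"]) auto

(* Diagonal block matrices. *)

(* The diagonal matrix with entry a on the first r1 and entry b on the last r2 indices.
   With (a,b) = (1,0) and (0,1) it is the projection onto one of the two blocks. *)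
definition split_diag :: "nat \<Rightarrow> nat \<Rightarrow> real \<Rightarrow> real \<Rightarrow> real mat" where
  "split_diag r1 r2 a b = mat_diag (r1 + r2) (\<lambda>i. if i < r1 then a else b)"

lemma split_diag_carrier[simp]: "split_diag r1 r2 a b \<in> carrier_mat (r1 + r2) (r1 + r2)"
  and split_diag_dims[simp]: "dim_row (split_diag r1 r2 a b) = r1 + r2" "dim_col (split_diag r1 r2 a b) = r1 + r2"
  by (auto simp: split_diag_def mat_diag_def)

lemma split_diag_index[simp]:
  "i < r1 + r2 \<Longrightarrow> j < r1 + r2 \<Longrightarrow>
    split_diag r1 r2 a b $$ (i,j) = (if i = j then if i < r1 then a else b else 0)"
  by (simp add: split_diag_def mat_diag_def)

lemma split_diag_transpose[simp]: "transpose_mat (split_diag r1 r2 a b) = split_diag r1 r2 a b"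
  by (auto simp: split_diag_def mat_diag_def intro!: eq_matI)

lemma split_diag_one[simp]: "split_diag r1 r2 1 1 = 1\<^sub>m (r1 + r2)"
  by (auto simp: split_diag_def mat_diag_def intro!: eq_matI)

lemma split_diag_mult[simp]:
  "split_diag r1 r2 a b * split_diag r1 r2 c d = split_diag r1 r2 (a * c) (b * d)"
  unfolding split_diag_def mat_diag_diag by (intro arg_cong[of _ _ "mat_diag (r1 + r2)"]) auto

lemma split_diag_mult_mat:
  assumes "dim_row Z = r1 + r2"
  shows "split_diag r1 r2 a b * Z = mat (r1 + r2) (dim_col Z) (\<lambda>(i,j). (if i < r1 then a else b) * Z $$ (i,j))"
  unfolding split_diag_def using assms by (intro mat_diag_mult_left) auto

lemma split_diag_mult_assoc[simp]:
  assumes "dim_row Z = r1 + r2"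
  shows "split_diag r1 r2 a b * (split_diag r1 r2 c d * Z) = split_diag r1 r2 (a * c) (b * d) * Z"
  using assms by (auto simp: split_diag_mult_mat intro!: eq_matI)

lemma split_diag_zero[simp]:
  assumes "dim_row Z = r1 + r2"
  shows "split_diag r1 r2 0 0 * Z = 0\<^sub>m (r1 + r2) (dim_col Z)"
  using assms by (auto simp: split_diag_mult_mat intro!: eq_matI)

lemma split_diag_smult:
  assumes "dim_row Z = r1 + r2"
  shows "split_diag r1 r2 (c * a) (c * b) * Z = c \<cdot>\<^sub>m (split_diag r1 r2 a b * Z)"
  using assms by (auto simp: split_diag_mult_mat intro!: eq_matI)

lemma bilinear_entry:
  fixes A M B :: "real mat"
  assumes A: "A \<in> carrier_mat n m" and M: "M \<in> carrier_mat n n" and B: "B \<in> carrier_mat n k"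
    and i: "i < m" and j: "j < k"
  shows "(transpose_mat A * M * B) $$ (i,j) = col A i \<bullet> (M *\<^sub>v col B j)"
proof -
  have "transpose_mat A * M * B = transpose_mat A * (M * B)" using A M B by simp
  also have "\<dots> $$ (i,j) = col A i \<bullet> col (M * B) j" using A M B i j by simp
  finally show ?thesis using col_mult2[OF M B j] by simp
qed

lemma sum_split_add:
  fixes f :: "nat \<Rightarrow> 'a::comm_monoid_add"
  shows "(\<Sum>l<r1 + r2. f l) = (\<Sum>l<r1. f l) + (\<Sum>l<r2. f (r1 + l))"
  by (induct r2) (simp_all add: add.assoc)

lemma col_space_mult_subset:
  fixes A B :: "real mat"
  assumes A: "A \<in> carrier_mat n m" and B: "B \<in> carrier_mat m k"
  shows "col_space (A * B) \<subseteq> col_space A"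
proof
  fix x assume "x \<in> col_space (A * B)"
  then obtain v where v: "v \<in> carrier_vec k" "x = (A * B) *\<^sub>v v"
    unfolding col_space_def using B by auto
  then have "x = A *\<^sub>v (B *\<^sub>v v)" and "B *\<^sub>v v \<in> carrier_vec (dim_col A)" using A B by auto
  then show "x \<in> col_space A" unfolding col_space_def by blast
qed

lemma split_product_entry:
  fixes U C :: "real mat"
  assumes U: "U \<in> carrier_mat n (r1 + r2)" and C: "C \<in> carrier_mat (r1 + r2) k"
    and x: "x < n" and y: "y < k"
  shows "(U * (split_diag r1 r2 \<alpha> \<beta> * C)) $$ (x,y) =
    \<alpha> * (\<Sum>i<r1. U $$ (x,i) * C $$ (i,y)) + \<beta> * (\<Sum>i<r2. U $$ (x, r1 + i) * C $$ (r1 + i, y))"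
proof -
  have "(U * (split_diag r1 r2 \<alpha> \<beta> * C)) $$ (x,y)
      = (\<Sum>l<r1 + r2. U $$ (x,l) * ((if l < r1 then \<alpha> else \<beta>) * C $$ (l,y)))"
    using x y U C by (simp add: split_diag_mult_mat scalar_prod_def lessThan_atLeast0)
  then show ?thesis by (simp add: sum_split_add sum_distrib_left mult.left_commute)
qed

(* The weights S = diag(1,2) make the two
   components have different singular values. *)
locale split_frame =
  fixes U C G H :: "real mat" and n k r1 r2 :: nat
  assumes U: "U \<in> carrier_mat n (r1 + r2)" and C: "C \<in> carrier_mat (r1 + r2) k"
    and G: "G \<in> carrier_mat (r1 + r2) (r1 + r2)" and H: "H \<in> carrier_mat (r1 + r2) (r1 + r2)"
    and G_sym: "transpose_mat G = G" and H_sym: "transpose_mat H = H"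
    and G_left: "G * (transpose_mat U * U) = 1\<^sub>m (r1 + r2)"
    and G_right: "(transpose_mat U * U) * G = 1\<^sub>m (r1 + r2)"
    and H_left: "H * (C * transpose_mat C) = 1\<^sub>m (r1 + r2)"
    and H_right: "(C * transpose_mat C) * H = 1\<^sub>m (r1 + r2)"
begin

abbreviation "S \<equiv> split_diag r1 r2 1 2"

definition Lm :: "real mat" where "Lm = U * (G * (G * transpose_mat U))"

definition Rm :: "real mat" where "Rm = transpose_mat C * (H * (S * (S * (H * C))))"

lemma dims[simp]:
  "dim_row U = n" "dim_col U = r1 + r2" "dim_row C = r1 + r2" "dim_col C = k"
  "dim_row G = r1 + r2" "dim_col G = r1 + r2" "dim_row H = r1 + r2" "dim_col H = r1 + r2"
  using U C G H by auto

lemma G_cancel[simp]: "dim_row Z = r1 + r2 \<Longrightarrow> G * (transpose_mat U * (U * Z)) = Z"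
proof -
  assume Z: "dim_row Z = r1 + r2"
  have "(G * (transpose_mat U * U)) * Z = G * (transpose_mat U * (U * Z))" using Z by (simp add: assoc_dim)
  then show ?thesis using Z G_left by simp
qed

lemma G_cancel'[simp]: "dim_row Z = r1 + r2 \<Longrightarrow> transpose_mat U * (U * (G * Z)) = Z"
proof -
  assume Z: "dim_row Z = r1 + r2"
  have "((transpose_mat U * U) * G) * Z = transpose_mat U * (U * (G * Z))" using Z by (simp add: assoc_dim)
  then show ?thesis using Z G_right by simp
qed

lemma H_cancel[simp]: "dim_row Z = r1 + r2 \<Longrightarrow> H * (C * (transpose_mat C * Z)) = Z"
proof -
  assume Z: "dim_row Z = r1 + r2"
  have "(H * (C * transpose_mat C)) * Z = H * (C * (transpose_mat C * Z))" using Z by (simp add: assoc_dim)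
  then show ?thesis using Z H_left by simp
qed

lemma H_cancel'[simp]: "dim_row Z = r1 + r2 \<Longrightarrow> C * (transpose_mat C * (H * Z)) = Z"
proof -
  assume Z: "dim_row Z = r1 + r2"
  have "((C * transpose_mat C) * H) * Z = C * (transpose_mat C * (H * Z))" using Z by (simp add: assoc_dim)
  then show ?thesis using Z H_right by simp
qed

definition X1 :: "real mat" where "X1 = U * (split_diag r1 r2 1 0 * C)"

definition X2 :: "real mat" where "X2 = U * (split_diag r1 r2 0 1 * C)"

lemmas mat_rules = assoc_dim transpose_mult_dim smult_mult_dim G_sym H_sym G_left H_left

lemma L_gram: "transpose_mat U * Lm * U = 1\<^sub>m (r1 + r2)"
  unfolding Lm_def by (simp add: mat_rules)

lemma R_gram: "C * Rm * transpose_mat C = S * S"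
  unfolding Rm_def by (simp add: mat_rules)

lemma R_gram_inverse:
  "(split_diag r1 r2 1 (1/2) * (split_diag r1 r2 1 (1/2) * C)) * Rm * transpose_mat C = 1\<^sub>m (r1 + r2)"
  unfolding Rm_def by (simp add: mat_rules)

lemma Lm_range: "dim_row Z = r1 + r2 \<Longrightarrow> Lm * (U * (transpose_mat U * (U * Z))) = U * Z"
  unfolding Lm_def by (simp add: mat_rules)

lemma Rm_range: "dim_row Z = r1 + r2 \<Longrightarrow>
    Rm * (transpose_mat C * (split_diag r1 r2 1 (1/2) * (split_diag r1 r2 1 (1/2) * (C * (transpose_mat C * Z)))))
    = transpose_mat C * Z"
  unfolding Rm_def by (simp add: mat_rules)

lemma sep_left: "transpose_mat X1 * Lm * X2 = 0\<^sub>m k k"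
  unfolding Lm_def X1_def X2_def by (simp add: mat_rules)

lemma sep_right: "X1 * Rm * transpose_mat X2 = 0\<^sub>m n n"
  unfolding Rm_def X1_def X2_def by (simp add: mat_rules)

lemma X1_cubic: "X1 * Rm * transpose_mat X1 * Lm * X1 = X1"
  unfolding Lm_def Rm_def X1_def by (simp add: mat_rules)

lemma X2_cubic: "X2 * Rm * transpose_mat X2 * Lm * X2 = 4 \<cdot>\<^sub>m X2"
  using split_diag_smult[of "C" r1 r2 4 0 1]
  unfolding Lm_def Rm_def X2_def by (simp add: mat_rules)

lemma Lm_factor: "Lm = (U * G) * transpose_mat (U * G)"
  unfolding Lm_def by (simp add: mat_rules)

lemma Rm_factor: "Rm = (transpose_mat C * (H * S)) * transpose_mat (transpose_mat C * (H * S))"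
  unfolding Rm_def by (simp add: mat_rules)

(* Consequences: dimensions, positive semidefiniteness and rank r1 + r2 of Lm and Rm;
   the lower rank bounds come from U^T Lm U = I and S^-2 C Rm C^T = I. *)
lemma Lm_carrier: "Lm \<in> carrier_mat n n" and Rm_carrier: "Rm \<in> carrier_mat k k"
  and X1_carrier: "X1 \<in> carrier_mat n k" and X2_carrier: "X2 \<in> carrier_mat n k"
  unfolding Lm_def Rm_def X1_def X2_def using U C G H by auto

lemma Lm_psd: "sym_psd n Lm"
  using Lm_factor sym_psd_gram[of "U * G" n "r1 + r2"] U G by simp

lemma Rm_psd: "sym_psd k Rm"
  using Rm_factor sym_psd_gram[of "transpose_mat C * (H * S)" k "r1 + r2"] C H by simp

lemma rank_Lm: "vec_space.rank n Lm = r1 + r2"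
proof (rule antisym)
  show "vec_space.rank n Lm \<le> r1 + r2"
    using rank_gram_le[of "U * G" n "r1 + r2"] Lm_factor U G by simp
  show "r1 + r2 \<le> vec_space.rank n Lm"
    by (rule rank_ge_of_identity[OF _ Lm_carrier U L_gram]) (use U in simp)
qed

lemma rank_Rm: "vec_space.rank k Rm = r1 + r2"
proof (rule antisym)
  show "vec_space.rank k Rm \<le> r1 + r2"
    using rank_gram_le[of "transpose_mat C * (H * S)" k "r1 + r2"] Rm_factor C H by simp
  show "r1 + r2 \<le> vec_space.rank k Rm"
    by (rule rank_ge_of_identity[OF mult_carrier_mat[OF split_diag_carrier
          mult_carrier_mat[OF split_diag_carrier C]] Rm_carrier _ R_gram_inverse]) (use C in simp)
qed

lemma consistent_factor:
  assumes D: "D \<in> carrier_mat (r1 + r2) (r1 + r2)"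
  shows "consistent Lm Rm (U * (D * C))"
  unfolding consistent_def row_space_def
proof
  define M where "M = U * (transpose_mat U * (U * (D * C)))"
  have "M \<in> carrier_mat n k" unfolding M_def using U C D by auto
  moreover have "U * (D * C) = Lm * M" unfolding M_def using Lm_range D by simp
  ultimately show "col_space (U * (D * C)) \<subseteq> col_space Lm"
    using col_space_mult_subset[OF Lm_carrier] by simp
  let ?Si = "split_diag r1 r2 1 (1/2)"
  define Z where "Z = transpose_mat D * transpose_mat U"
  define N where "N = transpose_mat C * (?Si * (?Si * (C * (transpose_mat C * Z))))"
  have "N \<in> carrier_mat k n" unfolding N_def Z_def using U C D by auto
  moreover have "transpose_mat (U * (D * C)) = Rm * N"
    unfolding N_def using Rm_range[of Z] D by (simp add: Z_def mat_rules)
  ultimately show "col_space (transpose_mat (U * (D * C))) \<subseteq> col_space Rm"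
    using col_space_mult_subset[OF Rm_carrier] by simp
qed

lemma X1_entry: "x < n \<Longrightarrow> y < k \<Longrightarrow> X1 $$ (x,y) = (\<Sum>i<r1. U $$ (x,i) * C $$ (i,y))"
  unfolding X1_def using split_product_entry[OF U C, of x y 1 0] by simp

lemma X2_entry: "x < n \<Longrightarrow> y < k \<Longrightarrow> X2 $$ (x,y) = (\<Sum>i<r2. U $$ (x, r1 + i) * C $$ (r1 + i, y))"
  unfolding X2_def using split_product_entry[OF U C, of x y 0 1] by simp

lemma U_orthonormal: "i < r1 + r2 \<Longrightarrow> j < r1 + r2 \<Longrightarrow>
    col U i \<bullet> (Lm *\<^sub>v col U j) = (if i = j then 1 else 0)"
  using bilinear_entry[OF U Lm_carrier U] L_gram by simp

lemma col_carriers: "col U x \<in> carrier_vec n" "col (transpose_mat C) x \<in> carrier_vec k"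
  using col_dim[of U x] col_dim[of "transpose_mat C" x] by simp_all

lemma C_orthogonal: "i < r1 + r2 \<Longrightarrow> j < r1 + r2 \<Longrightarrow>
    col (transpose_mat C) i \<bullet> (Rm *\<^sub>v col (transpose_mat C) j) = (if i = j then if i < r1 then 1 else 4 else 0)"
  using bilinear_entry[OF transpose_carrier_mat[THEN iffD2, OF C] Rm_carrier
      transpose_carrier_mat[THEN iffD2, OF C]] R_gram by simp

lemma X1_svd:
  assumes rk: "vec_space.rank n X1 = r1"
  shows "LR_svd Lm Rm X1 (\<lambda>_. 1) (\<lambda>i. col U i) (\<lambda>i. col (transpose_mat C) i)"
  unfolding LR_svd_def Let_def carrier_matD[OF X1_carrier] rk
proof (intro conjI allI impI)
  fix i j assume "i < r1" "j < r1"
  then show "col U i \<bullet> (Lm *\<^sub>v col U j) = (if i = j then 1 else 0)"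
    and "col (transpose_mat C) i \<bullet> (Rm *\<^sub>v col (transpose_mat C) j) = (if i = j then 1 else 0)"
    using U_orthonormal[of i j] C_orthogonal[of i j] by simp_all
next
  fix a b assume "a < n" "b < k"
  then show "X1 $$ (a, b) = (\<Sum>i<r1. 1 * col U i $ a * col (transpose_mat C) i $ b)"
    using X1_entry U C by simp
next
  fix i
  show "col U i \<in> carrier_vec n" "col (transpose_mat C) i \<in> carrier_vec k"
    by (simp_all only: col_carriers)
qed simp_all

lemma X2_svd:
  assumes rk: "vec_space.rank n X2 = r2"
  shows "LR_svd Lm Rm X2 (\<lambda>_. 2) (\<lambda>i. col U (r1 + i)) (\<lambda>i. (1/2) \<cdot>\<^sub>v col (transpose_mat C) (r1 + i))"
  unfolding LR_svd_def Let_def carrier_matD[OF X2_carrier] rk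
proof (intro conjI allI impI)
  fix i j assume i: "i < r2" and j: "j < r2"
  then show "col U (r1 + i) \<bullet> (Lm *\<^sub>v col U (r1 + j)) = (if i = j then 1 else 0)"
    using U_orthonormal[of "r1 + i" "r1 + j"] by simp
  let ?x = "col (transpose_mat C) (r1 + i)" and ?y = "col (transpose_mat C) (r1 + j)"
  have y: "?y \<in> carrier_vec k" using col_carriers(2) .
  have "((1/2) \<cdot>\<^sub>v ?x) \<bullet> (Rm *\<^sub>v ((1/2) \<cdot>\<^sub>v ?y)) = (1/4) * (?x \<bullet> (Rm *\<^sub>v ?y))"
    using mult_mat_vec[OF Rm_carrier y, of "1/2"] Rm_carrier y by simp
  then show "((1/2) \<cdot>\<^sub>v ?x) \<bullet> (Rm *\<^sub>v ((1/2) \<cdot>\<^sub>v ?y)) = (if i = j then 1 else 0)"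
    using C_orthogonal[of "r1 + i" "r1 + j"] i j by (cases "i = j") simp_all
next
  fix a b assume "a < n" "b < k"
  then show "X2 $$ (a, b) = (\<Sum>i<r2. 2 * col U (r1 + i) $ a * ((1/2) \<cdot>\<^sub>v col (transpose_mat C) (r1 + i)) $ b)"
    using X2_entry U C by simp
next
  fix i
  show "col U (r1 + i) \<in> carrier_vec n"
    and "(1/2) \<cdot>\<^sub>v col (transpose_mat C) (r1 + i) \<in> carrier_vec k"
    using col_carriers by simp_all
qed simp_all

(* Any (Lm,Rm)-singular values of X1 and X2 differ, since their squares are 1 and 4. *)
lemma singular_values_distinct:
  assumes s1: "LR_svd Lm Rm X1 \<sigma>1 P1 Q1" and i: "i < vec_space.rank n X1"
    and s2: "LR_svd Lm Rm X2 \<sigma>2 P2 Q2" and j: "j < vec_space.rank n X2"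
  shows "\<sigma>1 i \<noteq> \<sigma>2 j"
proof -
  have "X1 * Rm * transpose_mat X1 * Lm * X1 = 1 \<cdot>\<^sub>m X1"
    using X1_cubic by (auto intro!: eq_matI)
  then have "\<sigma>1 i ^ 2 = 1" by (rule LR_svd_sigma_sq[OF X1_carrier Lm_carrier Rm_carrier s1 i])
  moreover have "\<sigma>2 j ^ 2 = 4"
    by (rule LR_svd_sigma_sq[OF X2_carrier Lm_carrier Rm_carrier s2 j X2_cubic])
  ultimately show ?thesis by auto
qed

lemma strongly_separable:
  assumes rk1: "vec_space.rank n X1 = r1" and rk2: "vec_space.rank n X2 = r2"
  shows "strongly_sep Lm Rm X1 X2"
  unfolding strongly_sep_def weakly_sep_def carrier_matD[OF X1_carrier] carrier_matD[OF X2_carrier]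
  using sep_left sep_right X1_svd[OF rk1] X2_svd[OF rk2] singular_values_distinct by blast

end

lemma block_factorization:
  fixes X1 X2 :: "real mat"
  assumes X1: "X1 \<in> carrier_mat n k" and X2: "X2 \<in> carrier_mat n k"
    and rk1: "vec_space.rank n X1 = r1" and rk2: "vec_space.rank n X2 = r2"
  obtains U C where "U \<in> carrier_mat n (r1 + r2)" "C \<in> carrier_mat (r1 + r2) k"
    "X1 = U * (split_diag r1 r2 1 0 * C)" "X2 = U * (split_diag r1 r2 0 1 * C)"
    "X1 + X2 = U * C"
proof -
  obtain U1 C1 where U1: "U1 \<in> carrier_mat n r1" and C1: "C1 \<in> carrier_mat r1 k" and X1f: "X1 = U1 * C1"
    using vec_space.rank_factor[OF X1] rk1 by metis
  obtain U2 C2 where U2: "U2 \<in> carrier_mat n r2" and C2: "C2 \<in> carrier_mat r2 k" and X2f: "X2 = U2 * C2"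
    using vec_space.rank_factor[OF X2] rk2 by metis
  define U where "U = mat n (r1 + r2) (\<lambda>(a,i). if i < r1 then U1 $$ (a,i) else U2 $$ (a, i - r1))"
  define C where "C = mat (r1 + r2) k (\<lambda>(i,b). if i < r1 then C1 $$ (i,b) else C2 $$ (i - r1, b))"
  have U: "U \<in> carrier_mat n (r1 + r2)" and C: "C \<in> carrier_mat (r1 + r2) k"
    unfolding U_def C_def by auto
  have entry: "(U * (split_diag r1 r2 \<alpha> \<beta> * C)) $$ (x,y) = \<alpha> * X1 $$ (x,y) + \<beta> * X2 $$ (x,y)"
    if "x < n" "y < k" for x y \<alpha> \<beta>
    unfolding split_product_entry[OF U C that] X1f X2f using that U1 C1 U2 C2
    by (simp add: U_def C_def scalar_prod_def lessThan_atLeast0)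
  have "X1 = U * (split_diag r1 r2 1 0 * C)" "X2 = U * (split_diag r1 r2 0 1 * C)"
    using entry X1 X2 U C by (auto intro!: eq_matI)
  moreover have "X1 + X2 = U * (split_diag r1 r2 1 1 * C)"
    using entry[of _ _ 1 1] X1 X2 U C by (intro eq_matI) simp_all
  ultimately show ?thesis using that[OF U C] U C by simp
qed

lemma separating_metrics_exist:
  fixes X1 X2 :: "real mat"
  assumes X1: "X1 \<in> carrier_mat n k" and X2: "X2 \<in> carrier_mat n k"
    and rk1: "vec_space.rank n X1 = r1" and rk2: "vec_space.rank n X2 = r2"
    and rk: "vec_space.rank n (X1 + X2) = r1 + r2"
  shows "\<exists>Lm Rm. sym_psd n Lm \<and> sym_psd k Rm \<and>
           vec_space.rank n Lm = r1 + r2 \<and> vec_space.rank k Rm = r1 + r2 \<and>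
           consistent Lm Rm (X1 + X2) \<and> consistent Lm Rm X1 \<and> consistent Lm Rm X2 \<and>
           strongly_sep Lm Rm X1 X2"
proof -
  obtain U C where U: "U \<in> carrier_mat n (r1 + r2)" and C: "C \<in> carrier_mat (r1 + r2) k"
    and X1f: "X1 = U * (split_diag r1 r2 1 0 * C)" and X2f: "X2 = U * (split_diag r1 r2 0 1 * C)"
    and Xf: "X1 + X2 = U * C"
    using block_factorization[OF X1 X2 rk1 rk2] .
  have rkUC: "vec_space.rank n (U * C) = r1 + r2" using rk Xf by simp
  obtain G where G: "G \<in> carrier_mat (r1 + r2) (r1 + r2)" "transpose_mat G = G"
    "G * (transpose_mat U * U) = 1\<^sub>m (r1 + r2)" "(transpose_mat U * U) * G = 1\<^sub>m (r1 + r2)"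
    using gram_inverse[OF U vec_space.rank_full_injective[OF U factor_ranks(1)[OF U C rkUC]]] .
  have CT: "transpose_mat C \<in> carrier_mat k (r1 + r2)" using C by simp
  obtain H where H: "H \<in> carrier_mat (r1 + r2) (r1 + r2)" "transpose_mat H = H"
    "H * (C * transpose_mat C) = 1\<^sub>m (r1 + r2)" "(C * transpose_mat C) * H = 1\<^sub>m (r1 + r2)"
    using gram_inverse[OF CT transpose_injective_of_full_row_rank[OF C factor_ranks(2)[OF U C rkUC]]]
    by auto
  interpret split_frame U C G H n k r1 r2
    using U C G H by unfold_locales auto
  have "consistent Lm Rm (X1 + X2)"
    using consistent_factor[of "1\<^sub>m (r1 + r2)"] Xf C by simp
  moreover have "consistent Lm Rm X1" "consistent Lm Rm X2"
    unfolding X1f X2f by (simp_all add: consistent_factor)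
  moreover have "strongly_sep Lm Rm X1 X2"
    using strongly_separable rk1 rk2 X1f X2f unfolding X1_def X2_def by simp
  ultimately show ?thesis using Lm_psd Rm_psd rank_Lm rank_Rm by blast
qed

lemma traj_carrier: "traj L ys \<in> carrier_mat L (length ys - L + 1)"
  by (simp add: traj_def)

lemma traj_add:
  assumes "length X1 = N" "length X2 = N" "L \<le> N"
  shows "traj L (map2 (+) X1 X2) = traj L X1 + traj L X2"
  using assms by (auto simp: traj_def intro!: eq_matI)

theorem theorem1:
  fixes X1 X2 :: "real list" and N L r r1 r2 :: nat
  assumes "length X1 = N" and "length X2 = N"
    and "1 < L" and "L < N"
    and "L_rank L (map2 (+) X1 X2) = r"
    and "L_rank L X1 = r1" and "L_rank L X2 = r2"
    and "r1 + r2 = r"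
  shows "\<exists>Lm Rm. sym_psd L Lm \<and> sym_psd (N - L + 1) Rm \<and>
           vec_space.rank L Lm = r \<and> vec_space.rank (N - L + 1) Rm = r \<and>
           consistent Lm Rm (traj L (map2 (+) X1 X2)) \<and>
           consistent Lm Rm (traj L X1) \<and> consistent Lm Rm (traj L X2) \<and>
           strongly_sep Lm Rm (traj L X1) (traj L X2)"
proof -
  have sum: "traj L (map2 (+) X1 X2) = traj L X1 + traj L X2"
    using traj_add assms(1,2,4) by simp
  have "traj L X1 \<in> carrier_mat L (N - L + 1)" "traj L X2 \<in> carrier_mat L (N - L + 1)"
    using traj_carrier assms(1,2) by metis+
  from separating_metrics_exist[OF this, of r1 r2] show ?thesis
    using assms(5-8) unfolding sum L_rank_def by simp
qed

end
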